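(* Let $\mathcal C$ be a $\Delta$-complex labeled over $B(X,P)$, let $C$ be a $k$-cell of $\mathcal C$ with $k\ge2$ and characteristic map $\sigma\colon\Delta^k\to\mathcal C$. Let $q$ be any closed path in the $1$-skeleton of $\Delta^k$ based at $v_0$ (a sequence of edges of $\Delta^k$, each traversed in either direction), and let $p=\sigma(q)$ be its image, a path of $1$-cells and inverses of $1$-cells in $\mathcal C$. Then $\ell(C)\le\ell(p)$ in $M(X,P)$ with respect to the natural partial order.
   Context: A $\Delta$-complex is a CW-complex in which each $k$-cell $c$ has a distinguished characteristic map $\sigma_c\colon\Delta^k\to\mathcal C$, $\Delta^k=[v_0,\dots,v_k]$ the standard simplex with ordered vertices, such that the restriction of $\sigma_c$ to each $(k-1)$-face (identified order-preservingly with $\Delta^{k-1}$) is the distinguished characteristic map of a $(k-1)$-cell; each edge $[v_i,v_j]$, $i<j$, is directed from $v_i$ to $v_j$, and a $1$-cell $e$ is directed from $\sigma_e(v_0)$ to $\sigma_e(v_1)$; traversing it backwards is written $e^{-1}$. An immersion is a continuous map that is a local homeomorphism onto its image and commutes with characteristic maps (each $k$-cell $d$ maps onto a $k$-cell with $f\circ\sigma_d=\sigma_{f(d)}$). $B(X,P)$ is a $\Delta$-complex with one $0$-cell, $1$-cells indexed by $X$, $k$-cells ($2\le k\le n$) indexed by $P_k$, index sets pairwise disjoint, $P=\bigcup P_k$. $\mathcal C$ is labeled over $B(X,P)$ via an immersion $f_{\mathcal C}\colon\mathcal C\to B(X,P)$; $\ell(c)$ is the index of $f_{\mathcal C}(c)$,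 $\ell(e^{-1})=\ell(e)^{-1}$, and the label of a path is the concatenation of labels, read in $M(X,P)$. Boundary labels: for a $k$-cell $c$ ($k\ge2$) with characteristic map $\sigma$, let $c_i$ be the $(k-1)$-cell whose characteristic map is $\sigma$ restricted to the face omitting $v_i$, and $e(c)=\sigma([v_0,v_1])$; $bl(c)=\ell(\sigma[v_0,v_1])\ell(\sigma[v_1,v_2])\ell(\sigma[v_0,v_2])^{-1}$ if $k=2$, and $bl(c)=\ell(c_k)\cdots\ell(c_1)\ell(e(c))\ell(c_0)\ell(e(c))^{-1}$ if $k\ge3$; $bl(\rho)$ for $\rho\in P$ is the boundary label of the cell of $B(X,P)$ labeled $\rho$. $M(X,P)$ is the inverse monoid presented by generators $X\cup P$ and relations $\rho^2=\rho$ and $\rho=\rho\,bl(\rho)$ for all $\rho\in P$. The natural partial order on an inverse monoid: $a\le b$ iff $a=eb$ for some idempotent $e$. *)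

theory Defs
  imports Main
begin

text \<open>Generators: X is the type 'x, P is the type 'p (disjoint by construction).
  A letter is a generator together with a flag: True means the formal inverse.\<close>
datatype ('x,'p) gen = GX 'x | GP 'p
type_synonym ('x,'p) word = "(('x,'p) gen \<times> bool) list"

definition winv :: "('x,'p) word \<Rightarrow> ('x,'p) word" where
  "winv w = rev (map (\<lambda>(a,b). (a, \<not> b)) w)"

text \<open>face c i = the (k-1)-cell obtained by restricting the characteristic map of the
  k-cell c to the face omitting v_i.\<close>
definition semi_simplicial :: "'c set \<Rightarrow> ('c \<Rightarrow> nat) \<Rightarrow> ('c \<Rightarrow> nat \<Rightarrow> 'c) \<Rightarrow> bool" where
  "semi_simplicial cells dim face \<longleftrightarrow>
     (\<forall>c\<in>cells. \<forall>i. 0 < dim c \<and> i \<le> dim c \<longrightarrow>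
         face c i \<in> cells \<and> dim (face c i) = dim c - 1) \<and>
     (\<forall>c\<in>cells. \<forall>i j. 2 \<le> dim c \<and> i < j \<and> j \<le> dim c \<longrightarrow>
         face (face c j) i = face (face c i) (j - 1))"

text \<open>Restriction of the characteristic map of a k-cell c to the face spanned by the
  vertices with indices in S (deleting the other vertices, largest first).\<close>
definition restr :: "('c \<Rightarrow> nat \<Rightarrow> 'c) \<Rightarrow> 'c \<Rightarrow> nat \<Rightarrow> nat set \<Rightarrow> 'c" where
  "restr face c k S = fold (\<lambda>i d. face d i) (rev (sorted_list_of_set ({0..k} - S))) c"

definition edge :: "('c \<Rightarrow> nat \<Rightarrow> 'c) \<Rightarrow> 'c \<Rightarrow> nat \<Rightarrow> nat \<Rightarrow> nat \<Rightarrow> 'c" where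
  "edge face c k i j = restr face c k {i, j}"

text \<open>One 0-cell Pt, 1-cells Ed x (x in X), higher cells Hi r (r in P), where
  r lies in P_k for k = pdim r.\<close>
datatype ('x,'p) bcell = Pt | Ed 'x | Hi 'p

fun bdim :: "('p \<Rightarrow> nat) \<Rightarrow> ('x,'p) bcell \<Rightarrow> nat" where
  "bdim pdim Pt = 0"
| "bdim pdim (Ed x) = 1"
| "bdim pdim (Hi r) = pdim r"

fun blab :: "('x,'p) bcell \<Rightarrow> ('x,'p) word" where
  "blab Pt = []"
| "blab (Ed x) = [(GX x, False)]"
| "blab (Hi r) = [(GP r, False)]"

definition bl :: "('p \<Rightarrow> nat) \<Rightarrow> (('x,'p) bcell \<Rightarrow> nat \<Rightarrow> ('x,'p) bcell) \<Rightarrow> 'p \<Rightarrow> ('x,'p) word" where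
  "bl pdim bface r =
     (let k = pdim r; c = Hi r; e = edge bface c k 0 1 in
      if k = 2 then blab (bface c 2) @ blab (bface c 0) @ winv (blab (bface c 1))
      else concat (map (\<lambda>i. blab (bface c i)) (rev [1..<Suc k]))
           @ blab e @ blab (bface c 0) @ winv (blab e))"

text \<open>The congruence presenting M(X,P) as an inverse monoid: monoid with involution winv,
  Wagner's relations (giving the free inverse monoid), plus rho^2 = rho and rho = rho bl(rho).\<close>
inductive mcong :: "('p \<Rightarrow> nat) \<Rightarrow> (('x,'p) bcell \<Rightarrow> nat \<Rightarrow> ('x,'p) bcell)
    \<Rightarrow> ('x,'p) word \<Rightarrow> ('x,'p) word \<Rightarrow> bool"
  for pdim bface where
  refl: "mcong pdim bface u u"
| sym: "mcong pdim bface u v \<Longrightarrow> mcong pdim bface v u"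
| trans: "mcong pdim bface u v \<Longrightarrow> mcong pdim bface v w \<Longrightarrow> mcong pdim bface u w"
| ctx: "mcong pdim bface u v \<Longrightarrow> mcong pdim bface (a @ u @ b) (a @ v @ b)"
| inv1: "mcong pdim bface (u @ winv u @ u) u"
| inv2: "mcong pdim bface (u @ winv u @ v @ winv v) (v @ winv v @ u @ winv u)"
| idem: "mcong pdim bface [(GP r, False), (GP r, False)] [(GP r, False)]"
| rel: "mcong pdim bface [(GP r, False)] ((GP r, False) # bl pdim bface r)"

definition mle :: "('p \<Rightarrow> nat) \<Rightarrow> (('x,'p) bcell \<Rightarrow> nat \<Rightarrow> ('x,'p) bcell)
    \<Rightarrow> ('x,'p) word \<Rightarrow> ('x,'p) word \<Rightarrow> bool" where
  "mle pdim bface a b \<longleftrightarrow>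
     (\<exists>e. mcong pdim bface (e @ e) e \<and> mcong pdim bface a (e @ b))"

definition labeling :: "'c set \<Rightarrow> ('c \<Rightarrow> nat) \<Rightarrow> ('c \<Rightarrow> nat \<Rightarrow> 'c) \<Rightarrow> ('p \<Rightarrow> nat)
    \<Rightarrow> (('x,'p) bcell \<Rightarrow> nat \<Rightarrow> ('x,'p) bcell) \<Rightarrow> ('c \<Rightarrow> ('x,'p) bcell) \<Rightarrow> bool" where
  "labeling cells dim face pdim bface f \<longleftrightarrow>
     (\<forall>c\<in>cells. bdim pdim (f c) = dim c) \<and>
     (\<forall>c\<in>cells. \<forall>i. 0 < dim c \<and> i \<le> dim c \<longrightarrow> f (face c i) = bface (f c) i)"

text \<open>A closed path in the 1-skeleton of Delta^k based at v_0, given by its vertex sequence.\<close>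
definition closed_path :: "nat \<Rightarrow> nat list \<Rightarrow> bool" where
  "closed_path k ws \<longleftrightarrow> ws \<noteq> [] \<and> hd ws = 0 \<and> last ws = 0 \<and> (\<forall>w\<in>set ws. w \<le> k) \<and>
     (\<forall>t. Suc t < length ws \<longrightarrow> ws ! t \<noteq> ws ! Suc t)"

definition path_label :: "('c \<Rightarrow> nat \<Rightarrow> 'c) \<Rightarrow> ('c \<Rightarrow> ('x,'p) bcell) \<Rightarrow> 'c \<Rightarrow> nat
    \<Rightarrow> nat list \<Rightarrow> ('x,'p) word" where
  "path_label face f c k ws =
     concat (map (\<lambda>(a,b). if a < b then blab (f (edge face c k a b))
                          else winv (blab (f (edge face c k b a)))) (zip ws (tl ws)))"

end

theory Submission
  imports Defs
begin

text \<open>The label \<open>\<rho> = \<ell>(C)\<close> is idempotent and \<open>\<rho> = \<rho> bl(\<rho>)\<close>. For \<open>k \<ge> 3\<close> the word \<open>bl(\<rho>)\<close>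
  is a product of the idempotents \<open>\<ell>(c\<^sub>k), \<dots>, \<ell>(c\<^sub>1)\<close> and a conjugate of \<open>\<ell>(c\<^sub>0)\<close>, so \<open>\<rho>\<close> lies
  below every \<open>\<ell>(c\<^sub>i)\<close> with \<open>i \<ge> 1\<close>. Descending through faces that keep \<open>v\<^sub>0\<close>, \<open>v\<close> and \<open>w\<close>
  one reaches a 2-face, whose defining relation shows that \<open>\<rho>\<close> lies below the label of the
  triangle \<open>v\<^sub>0 \<rightarrow> v \<rightarrow> w \<rightarrow> v\<^sub>0\<close>. Writing \<open>a\<^sub>v\<close> for the label of the edge from \<open>v\<^sub>0\<close> to \<open>v\<close>, this
  gives \<open>\<rho> a\<^sub>v s = \<rho> a\<^sub>w\<close> for the label \<open>s\<close> of every edge from \<open>v\<close> to \<open>w\<close>, so along a closed path at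
  \<open>v\<^sub>0\<close> the products telescope to \<open>\<rho> \<ell>(p) = \<rho>\<close>, i.e. \<open>\<rho> \<le> \<ell>(p)\<close>.\<close>

lemma winv_append [simp]: "winv (u @ v) = winv v @ winv u"
  by (simp add: winv_def)

lemma winv_Nil [simp]: "winv [] = []"
  by (simp add: winv_def)

lemma winv_winv [simp]: "winv (winv u) = u"
  by (induct u) (auto simp: winv_def)

section \<open>Faces and edge paths of \<open>\<Delta>\<^sup>k\<close>\<close>

definition del_vertices :: "('c \<Rightarrow> nat \<Rightarrow> 'c) \<Rightarrow> 'c \<Rightarrow> nat list \<Rightarrow> 'c"
  where "del_vertices face c L = fold (\<lambda>i d. face d i) L c"

lemma del_vertices_Cons [simp]: "del_vertices face c (l # L) = del_vertices face (face c l) L"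
  by (simp add: del_vertices_def)

lemma del_vertices_append:
  "del_vertices face c (L1 @ L2) = del_vertices face (del_vertices face c L1) L2"
  by (simp add: del_vertices_def)

lemma restr_eq_del_vertices:
  "restr face c K S = del_vertices face c (rev (sorted_list_of_set ({0..K} - S)))"
  by (simp add: restr_def del_vertices_def)

text \<open>The semi-simplicial identity lets the deletion of a low vertex \<open>m\<close> be moved to the front.\<close>

lemma del_vertices_snoc:
  assumes ss: "semi_simplicial cells dim face"
  shows "c \<in> cells \<Longrightarrow> sorted_wrt (>) L \<Longrightarrow> \<forall>x\<in>set L. m < x \<and> x \<le> dim c
    \<Longrightarrow> length L + 2 \<le> dim c
    \<Longrightarrow> del_vertices face c (L @ [m]) = del_vertices face (face c m) (map (\<lambda>x. x - 1) L)"
proof (induct L arbitrary: c)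
  case (Cons l L)
  have fc: "face c l \<in> cells" "dim (face c l) = dim c - 1"
    using ss Cons.prems unfolding semi_simplicial_def by auto
  have "face (face c l) m = face (face c m) (l - 1)"
    using ss Cons.prems unfolding semi_simplicial_def by auto
  then show ?case using Cons.hyps[OF fc(1)] Cons.prems fc(2) by force
qed simp

lemma rev_sorted_list_of_set_eq:
  "sorted_wrt (>) L \<Longrightarrow> rev (sorted_list_of_set (set L)) = L"
  by (metis finite_set rev_rev_ident set_rev sorted_list_of_set.set_sorted_key_list_of_set
      sorted_list_of_set.strict_sorted_key_list_of_set sorted_wrt_rev strict_sorted_equal)

text \<open>The index, in the face of \<open>\<Delta>\<^sup>K\<close> omitting \<open>v\<^sub>m\<close>, of the vertex \<open>v\<^sub>x\<close> (\<open>x \<noteq> m\<close>).\<close>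

definition face_vertex :: "nat \<Rightarrow> nat \<Rightarrow> nat"
  where "face_vertex m x = (if x < m then x else x - 1)"

lemma face_vertex_less_iff:
  "x \<noteq> m \<Longrightarrow> y \<noteq> m \<Longrightarrow> face_vertex m x < face_vertex m y \<longleftrightarrow> x < y"
  by (auto simp: face_vertex_def)

lemma bij_betw_face_vertex:
  "m \<le> K \<Longrightarrow> 0 < K \<Longrightarrow> bij_betw (face_vertex m) ({0..K} - {m}) {0..K - 1}"
  by (rule bij_betw_byWitness[where f' = "\<lambda>y. if y < m then y else Suc y"])
    (auto simp: face_vertex_def)

lemma restr_face:
  assumes ss: "semi_simplicial cells dim face" and c: "c \<in> cells" "dim c = K"
    and m: "m \<le> K" "m \<notin> S" and S: "S \<subseteq> {0..K}" "2 \<le> card S"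
  shows "restr face c K S = restr face (face c m) (K - 1) (face_vertex m ` S)"
proof -
  define T where "T = {0..K} - S"
  define DL where "DL = rev (sorted_list_of_set T)"
  have sDL: "sorted_wrt (>) DL" and setDL: "set DL = T"
    by (simp_all add: DL_def T_def sorted_wrt_rev)
  have "length DL = K + 1 - card S"
    using S by (simp add: DL_def T_def card_Diff_subset finite_subset)
  moreover obtain L1 L2 where DL: "DL = L1 @ m # L2"
    using setDL m by (metis Diff_iff atLeastAtMost_iff le0 split_list T_def)
  ultimately have len: "length L1 + 2 \<le> K" using S by simp
  have L1: "\<forall>x\<in>set L1. m < x \<and> x \<le> dim c" and L2: "\<forall>x\<in>set L2. x < m"
    using sDL setDL c unfolding DL T_def by (auto simp: sorted_wrt_append)
  have L12: "map (face_vertex m) (L1 @ L2) = map (\<lambda>x. x - 1) L1 @ L2"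
    using L1 L2 by (auto simp: face_vertex_def intro: map_idI)
  have "restr face c K S = del_vertices face (del_vertices face c (L1 @ [m])) L2"
    using del_vertices_append[of face c "L1 @ [m]" L2]
    by (simp add: restr_eq_del_vertices flip: T_def DL_def add: DL)
  also have "\<dots> = del_vertices face (face c m) (map (face_vertex m) (L1 @ L2))"
    using del_vertices_snoc[OF ss c(1) _ L1] sDL len c(2) unfolding L12
    by (simp add: DL sorted_wrt_append del_vertices_append)
  also have "map (face_vertex m) (L1 @ L2)
      = rev (sorted_list_of_set ({0..K - 1} - face_vertex m ` S))"
  proof -
    have "sorted_wrt (>) (L1 @ L2)" "m \<notin> set (L1 @ L2)"
      using sDL L1 L2 unfolding DL by (auto simp: sorted_wrt_append)
    then have sorted: "sorted_wrt (>) (map (face_vertex m) (L1 @ L2))"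
      unfolding sorted_wrt_map
      by (metis (no_types, lifting) face_vertex_less_iff sorted_wrt_mono_rel)
    have "set (L1 @ L2) = ({0..K} - {m}) - S"
      using setDL sDL unfolding DL T_def by (auto simp: sorted_wrt_append)
    then have "set (map (face_vertex m) (L1 @ L2)) = face_vertex m ` (({0..K} - {m}) - S)"
      by (simp flip: image_Un)
    also have "\<dots> = {0..K - 1} - face_vertex m ` S"
    proof -
      have "S \<subseteq> {0..K} - {m}" using S m by auto
      moreover have "inj_on (face_vertex m) ({0..K} - {m})"
        "face_vertex m ` ({0..K} - {m}) = {0..K - 1}"
        using bij_betw_face_vertex[OF m(1)] len by (auto simp: bij_betw_def)
      ultimately show ?thesis
        using inj_on_image_set_diff[of "face_vertex m" "{0..K} - {m}" "{0..K} - {m}" S] by simp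
    qed
    finally show ?thesis using sorted by (metis rev_sorted_list_of_set_eq)
  qed
  finally show ?thesis by (simp add: restr_eq_del_vertices)
qed

lemma edge_face:
  assumes "semi_simplicial cells dim face" "c \<in> cells" "dim c = K"
    and "a < b" "b \<le> K" "m \<le> K" "m \<noteq> a" "m \<noteq> b"
  shows "edge face c K a b = edge face (face c m) (K - 1) (face_vertex m a) (face_vertex m b)"
  using restr_face[OF assms(1-3), of m "{a, b}"] assms by (simp add: edge_def)

definition edge_label :: "('c \<Rightarrow> nat \<Rightarrow> 'c) \<Rightarrow> ('c \<Rightarrow> ('x,'p) bcell) \<Rightarrow> 'c \<Rightarrow> nat
    \<Rightarrow> nat \<Rightarrow> nat \<Rightarrow> ('x,'p) word"
  where "edge_label face f c k v w =
    (if v < w then blab (f (edge face c k v w)) else winv (blab (f (edge face c k w v))))"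

lemma path_label_eq_concat_edge_label:
  "path_label face f c k ws = concat (map (case_prod (edge_label face f c k)) (zip ws (tl ws)))"
  by (simp add: path_label_def edge_label_def case_prod_beta')

lemma edge_label_swap: "v \<noteq> w \<Longrightarrow> edge_label face f c k v w = winv (edge_label face f c k w v)"
  by (simp add: edge_label_def)

lemma edge_label_face:
  assumes "semi_simplicial cells dim face" "c \<in> cells" "dim c = K"
    and "a \<noteq> b" "a \<le> K" "b \<le> K" "m \<le> K" "m \<noteq> a" "m \<noteq> b"
  shows "edge_label face f c K a b
    = edge_label face f (face c m) (K - 1) (face_vertex m a) (face_vertex m b)"
  using assms edge_face[OF assms(1-3)]
  by (cases "a < b") (simp_all add: edge_label_def face_vertex_less_iff)

definition spoke_label :: "('c \<Rightarrow> nat \<Rightarrow> 'c) \<Rightarrow> ('c \<Rightarrow> ('x,'p) bcell) \<Rightarrow> 'c \<Rightarrow> nat \<Rightarrow> nat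
    \<Rightarrow> ('x,'p) word"
  where "spoke_label face f c k v = (if v = 0 then [] else edge_label face f c k 0 v)"

lemma closed_path_edge:
  assumes "closed_path k ws" "(v, w) \<in> set (zip ws (tl ws))"
  shows "v \<noteq> w" "v \<le> k" "w \<le> k"
proof -
  obtain t where "v = ws ! t" "w = ws ! Suc t" "Suc t < length ws"
    using assms(2) by (auto simp: in_set_zip nth_tl)
  then show "v \<noteq> w" "v \<le> k" "w \<le> k"
    using assms(1) by (auto simp: closed_path_def)
qed

section \<open>The inverse monoid \<open>M(X,P)\<close>\<close>

context
  fixes pdim :: "'p \<Rightarrow> nat" and bface :: "('x,'p) bcell \<Rightarrow> nat \<Rightarrow> ('x,'p) bcell"
begin

abbreviation mcong_rel :: "('x,'p) word \<Rightarrow> ('x,'p) word \<Rightarrow> bool" (infix "\<approx>" 50)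
  where "u \<approx> v \<equiv> mcong pdim bface u v"

abbreviation idempotent :: "('x,'p) word \<Rightarrow> bool"
  where "idempotent e \<equiv> e @ e \<approx> e"

lemmas [trans] = mcong.trans[of pdim bface]

lemma mcong_ctx_eqI: "u \<approx> v \<Longrightarrow> x = a @ u @ b \<Longrightarrow> y = a @ v @ b \<Longrightarrow> x \<approx> y"
  by (simp add: mcong.ctx)

lemma mcong_append: "u \<approx> u' \<Longrightarrow> v \<approx> v' \<Longrightarrow> u @ v \<approx> u' @ v'"
  by (rule mcong.trans[OF mcong_ctx_eqI[of u u' _ "[]" v] mcong_ctx_eqI[of v v' _ u' "[]"]]) auto

lemma mcong_inv1_prefix: "u @ winv u @ u @ b \<approx> u @ b"
  using mcong_ctx_eqI[OF mcong.inv1[of pdim bface u], of _ "[]" b] by simp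

lemma idempotent_mcong_winv:
  assumes e: "idempotent e"
  shows "e \<approx> winv e"
proof -
  have s1: "winv e \<approx> (winv e @ e) @ (e @ winv e)"
  proof -
    have "winv e \<approx> winv e @ e @ winv e"
      using mcong.inv1[of pdim bface "winv e"] by (simp add: mcong.sym)
    also have "\<dots> \<approx> winv e @ (e @ e) @ winv e"
      by (rule mcong_ctx_eqI[OF mcong.sym[OF e]]) auto
    finally show ?thesis by simp
  qed
  have s2: "(winv e @ e) @ (e @ winv e) \<approx> (e @ winv e) @ (winv e @ e)"
    using mcong.inv2[of pdim bface "winv e" e] by simp
  have "e \<approx> e @ e" using e by (rule mcong.sym)
  also have "\<dots> \<approx> (e @ winv e @ e) @ (e @ winv e @ e)"
    using mcong_append[OF mcong.sym[OF mcong.inv1] mcong.sym[OF mcong.inv1]] .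
  also have "\<dots> \<approx> e @ ((e @ winv e) @ (winv e @ e)) @ e"
    by (rule mcong_ctx_eqI[OF s2, of _ e e]) auto
  also have "\<dots> = (e @ e) @ winv e @ winv e @ (e @ e)" by simp
  also have "\<dots> \<approx> e @ winv e @ winv e @ e"
    using mcong_append[OF e mcong_append[OF mcong.refl mcong_append[OF mcong.refl e]]] by simp
  also have "\<dots> \<approx> winv e"
    using mcong.sym[OF mcong.trans[OF s1 s2]] by simp
  finally show ?thesis .
qed

lemma idempotents_commute:
  assumes "idempotent e" "idempotent f"
  shows "e @ f \<approx> f @ e"
proof -
  have e: "e \<approx> e @ winv e"
    by (rule mcong.trans[OF mcong.sym[OF assms(1)]
          mcong_append[OF mcong.refl idempotent_mcong_winv[OF assms(1)]]])
  have f: "f \<approx> f @ winv f"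
    by (rule mcong.trans[OF mcong.sym[OF assms(2)]
          mcong_append[OF mcong.refl idempotent_mcong_winv[OF assms(2)]]])
  have "e @ f \<approx> (e @ winv e) @ (f @ winv f)" using mcong_append[OF e f] .
  also have "\<dots> \<approx> (f @ winv f) @ (e @ winv e)" using mcong.inv2[of pdim bface e f] by simp
  also have "\<dots> \<approx> f @ e" using mcong_append[OF mcong.sym[OF f] mcong.sym[OF e]] .
  finally show ?thesis .
qed

lemma idempotent_append_winv: "idempotent (x @ winv x)"
  using mcong_inv1_prefix[of x "winv x"] by simp

lemma mcong_inverse_unique:
  assumes xyx: "x @ y @ x \<approx> x" and yxy: "y @ x @ y \<approx> y"
  shows "y \<approx> winv x"
proof -
  let ?z = "winv x"
  have xy: "idempotent (x @ y)" using mcong_append[OF xyx mcong.refl, of y] by simp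
  have yx: "idempotent (y @ x)" using mcong_append[OF yxy mcong.refl, of x] by simp
  have xz: "idempotent (x @ ?z)" by (rule idempotent_append_winv)
  have zx: "idempotent (?z @ x)" using idempotent_append_winv[of ?z] by simp
  have "y \<approx> y @ x @ y" using yxy by (rule mcong.sym)
  also have "\<dots> \<approx> y @ (x @ ?z @ x) @ y"
    by (rule mcong_ctx_eqI[OF mcong.sym[OF mcong.inv1]]) auto
  also have "\<dots> = (y @ x) @ (?z @ x) @ y" by simp
  also have "\<dots> \<approx> (?z @ x) @ (y @ x) @ y"
    by (rule mcong_ctx_eqI[OF idempotents_commute[OF yx zx], of _ "[]" y]) auto
  also have "\<dots> = ?z @ x @ (y @ x @ y)" by simp
  also have "\<dots> \<approx> ?z @ x @ y"
    by (rule mcong_ctx_eqI[OF yxy, of _ "?z @ x" "[]"]) auto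
  finally have y: "y \<approx> ?z @ x @ y" .
  have "?z \<approx> ?z @ x @ ?z" using mcong.inv1[of pdim bface ?z] by (simp add: mcong.sym)
  also have "\<dots> \<approx> ?z @ (x @ y @ x) @ ?z"
    by (rule mcong_ctx_eqI[OF mcong.sym[OF xyx]]) auto
  also have "\<dots> = ?z @ (x @ y) @ (x @ ?z)" by simp
  also have "\<dots> \<approx> ?z @ (x @ ?z) @ (x @ y)"
    by (rule mcong_ctx_eqI[OF idempotents_commute[OF xy xz], of _ ?z "[]"]) auto
  also have "\<dots> = (?z @ x @ ?z) @ x @ y" by simp
  also have "\<dots> \<approx> ?z @ x @ y"
    by (rule mcong_ctx_eqI[OF mcong.inv1, of _ "[]"]) auto
  finally have z: "?z \<approx> ?z @ x @ y" .
  show ?thesis using y mcong.sym[OF z] by (rule mcong.trans)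
qed

lemma mcong_winv:
  assumes "u \<approx> v"
  shows "winv u \<approx> winv v"
proof -
  have "u @ winv v @ u \<approx> v @ winv v @ v"
    using mcong_append[OF assms mcong_append[OF mcong.refl assms]] .
  then have uvu: "u @ winv v @ u \<approx> u"
    by (rule mcong.trans[OF _ mcong.trans[OF mcong.inv1 mcong.sym[OF assms]]])
  have "winv v @ u @ winv v \<approx> winv v @ v @ winv v"
    by (rule mcong_ctx_eqI[OF assms]) auto
  then have vuv: "winv v @ u @ winv v \<approx> winv v"
    using mcong.inv1[of pdim bface "winv v"] by (simp add: mcong.trans)
  show ?thesis using mcong_inverse_unique[OF uvu vuv] by (rule mcong.sym)
qed

lemma idempotent_append:
  assumes "idempotent f" "idempotent g"
  shows "idempotent (f @ g)"
proof -
  have "(f @ g) @ (f @ g) = f @ (g @ f) @ g" by simp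
  also have "\<dots> \<approx> f @ (f @ g) @ g"
    by (rule mcong_ctx_eqI[OF idempotents_commute[OF assms(2,1)]]) auto
  also have "\<dots> = (f @ f) @ (g @ g)" by simp
  also have "\<dots> \<approx> f @ g" by (rule mcong_append[OF assms])
  finally show ?thesis .
qed

lemma idempotent_concat: "\<forall>w\<in>set ws. idempotent w \<Longrightarrow> idempotent (concat ws)"
proof (induct ws)
  case (Cons w ws)
  then show ?case using idempotent_append[of w "concat ws"] by simp
qed (simp add: mcong.refl)

lemma idempotent_conj:
  assumes "idempotent y"
  shows "idempotent (x @ y @ winv x)"
proof -
  have xx: "idempotent (winv x @ x)" using idempotent_append_winv[of "winv x"] by simp
  have "(x @ y @ winv x) @ (x @ y @ winv x) = x @ (y @ (winv x @ x)) @ y @ winv x" by simp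
  also have "\<dots> \<approx> x @ ((winv x @ x) @ y) @ y @ winv x"
    by (rule mcong_ctx_eqI[OF idempotents_commute[OF assms xx]]) auto
  also have "\<dots> = (x @ winv x @ x) @ (y @ y) @ winv x" by simp
  also have "\<dots> \<approx> x @ y @ winv x"
    by (rule mcong_append[OF mcong.inv1 mcong_append[OF assms mcong.refl]])
  finally show ?thesis .
qed

text \<open>For idempotent \<open>e\<close>, \<open>below e w\<close> says \<open>e \<le> w\<close> in the natural partial order.\<close>

definition below :: "('x,'p) word \<Rightarrow> ('x,'p) word \<Rightarrow> bool"
  where "below e w \<longleftrightarrow> e \<approx> e @ w"

lemma below_trans:
  assumes "below e f" "below f w"
  shows "below e w"
proof -
  have ef: "e \<approx> e @ f" and fw: "f \<approx> f @ w" using assms below_def by auto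
  have "e \<approx> e @ f" by (rule ef)
  also have "\<dots> \<approx> e @ f @ w" by (rule mcong_append[OF mcong.refl fw])
  also have "\<dots> = (e @ f) @ w" by simp
  also have "\<dots> \<approx> e @ w" by (rule mcong_append[OF mcong.sym[OF ef] mcong.refl])
  finally show ?thesis by (simp add: below_def)
qed

lemma below_winv_left:
  assumes "idempotent e" "below e w"
  shows "e \<approx> winv w @ e"
proof -
  have e: "e \<approx> winv e" using assms(1) by (rule idempotent_mcong_winv)
  also have "\<dots> \<approx> winv w @ winv e"
    using mcong_winv[of e "e @ w"] assms(2) unfolding below_def by simp
  also have "\<dots> \<approx> winv w @ e" by (rule mcong_append[OF mcong.refl mcong.sym[OF e]])
  finally show ?thesis .
qed

lemma below_append_winv:
  assumes "idempotent e" "below e w"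
  shows "below e (w @ winv w)"
proof -
  have "e \<approx> e @ e" using assms(1) by (rule mcong.sym)
  also have "\<dots> \<approx> (e @ w) @ (winv w @ e)"
    using mcong_append[OF assms(2)[unfolded below_def] below_winv_left[OF assms]] .
  also have "\<dots> = e @ (w @ winv w) @ e" by simp
  also have "\<dots> \<approx> e @ e @ (w @ winv w)"
    by (rule mcong_ctx_eqI[OF idempotents_commute[OF idempotent_append_winv[of w] assms(1)], of _ e "[]"])
      auto
  also have "\<dots> \<approx> e @ (w @ winv w)"
    by (rule mcong_ctx_eqI[OF assms(1), of _ "[]"]) auto
  finally show ?thesis by (simp add: below_def)
qed

lemma below_winv:
  assumes "idempotent e" "below e w"
  shows "below e (winv w)"
proof -
  have "e @ winv w \<approx> (winv w @ e) @ winv w"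
    by (rule mcong_append[OF below_winv_left[OF assms] mcong.refl])
  also have "\<dots> \<approx> winv w @ (e @ w) @ winv w"
    by (rule mcong_ctx_eqI[of e "e @ w"]) (use assms(2) below_def in auto)
  also have "\<dots> = winv w @ e @ (w @ winv w)" by simp
  also have "\<dots> \<approx> winv w @ (w @ winv w) @ e"
    by (rule mcong_ctx_eqI[OF idempotents_commute[OF assms(1) idempotent_append_winv[of w]],
          of _ "winv w" "[]"]) auto
  also have "\<dots> \<approx> winv w @ e" using mcong_inv1_prefix[of "winv w" e] by simp
  also have "\<dots> \<approx> e" using below_winv_left[OF assms] by (rule mcong.sym)
  finally show ?thesis by (simp add: below_def mcong.sym)
qed

lemma below_append_winv_mcong:
  assumes "idempotent e" "below e (x @ winv y)"
  shows "e @ x \<approx> e @ y"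
proof -
  have xy: "below e (x @ winv y @ y @ winv x)"
    using below_append_winv[OF assms] by simp
  have "e @ x \<approx> (e @ x @ winv y @ y @ winv x) @ x"
    using mcong_append[OF xy[unfolded below_def] mcong.refl] by simp
  also have "\<dots> = e @ x @ (winv y @ y @ winv x @ x)" by simp
  also have "\<dots> \<approx> e @ x @ (winv x @ x @ winv y @ y)"
    by (rule mcong_ctx_eqI[OF mcong.inv2[of pdim bface "winv y" "winv x"], of _ "e @ x" "[]"])
      auto
  also have "\<dots> = (e @ x @ winv x @ x) @ winv y @ y" by simp
  also have "\<dots> \<approx> (e @ x) @ winv y @ y"
    by (rule mcong_ctx_eqI[OF mcong.inv1[of pdim bface x], of _ e "winv y @ y"]) auto
  also have "\<dots> = (e @ x @ winv y) @ y" by simp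
  also have "\<dots> \<approx> e @ y"
    using mcong_append[OF mcong.sym[OF assms(2)[unfolded below_def]] mcong.refl] .
  finally show ?thesis .
qed

lemma below_suffix_winv:
  assumes "below e (z @ winv x)"
  shows "below e (x @ winv x)"
proof -
  have e: "e \<approx> e @ z @ winv x" using assms by (simp add: below_def)
  have "e @ x @ winv x \<approx> (e @ z @ winv x) @ x @ winv x"
    by (rule mcong_append[OF e mcong.refl])
  also have "\<dots> = (e @ z) @ (winv x @ winv (winv x) @ winv x) @ []" by simp
  also have "\<dots> \<approx> (e @ z) @ winv x @ []"
    by (rule mcong_ctx_eqI[OF mcong.inv1[of pdim bface "winv x"], of _ "e @ z" "[]"]) auto
  also have "\<dots> \<approx> e" using mcong.sym[OF e] by simp
  finally show ?thesis by (simp add: below_def mcong.sym)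
qed

lemma below_append_idempotentD:
  assumes "idempotent f" "idempotent g" "below e (f @ g)"
  shows "below e f" "below e g"
proof -
  have e: "e \<approx> e @ f @ g" using assms(3) below_def by simp
  have "e @ f \<approx> (e @ f @ g) @ f" by (rule mcong_append[OF e mcong.refl])
  also have "\<dots> = e @ f @ (g @ f)" by simp
  also have "\<dots> \<approx> e @ f @ (f @ g)"
    by (rule mcong_ctx_eqI[OF idempotents_commute[OF assms(2,1)], of _ "e @ f" "[]"]) auto
  also have "\<dots> = e @ (f @ f) @ g" by simp
  also have "\<dots> \<approx> e @ f @ g" by (rule mcong_ctx_eqI[OF assms(1), of _ e g]) auto
  also have "\<dots> \<approx> e" by (rule mcong.sym[OF e])
  finally show "below e f" by (simp add: below_def mcong.sym)
  have "e @ g \<approx> (e @ f @ g) @ g" by (rule mcong_append[OF e mcong.refl])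
  also have "\<dots> = (e @ f) @ (g @ g) @ []" by simp
  also have "\<dots> \<approx> (e @ f) @ g @ []" by (rule mcong_ctx_eqI[OF assms(2), of _ "e @ f" "[]"]) auto
  also have "\<dots> \<approx> e" using mcong.sym[OF e] by simp
  finally show "below e g" by (simp add: below_def mcong.sym)
qed

lemma below_concat_idempotentD:
  assumes "\<forall>w\<in>set ws. idempotent w" "idempotent t" "below e (concat ws @ t)"
  shows "\<forall>w\<in>set ws. below e w"
  using assms
proof (induct ws)
  case (Cons w ws)
  have "idempotent (concat ws @ t)"
    using Cons.prems(1,2) idempotent_concat[of ws] idempotent_append by simp
  then have "below e w" "below e (concat ws @ t)"
    using below_append_idempotentD[of w "concat ws @ t" e] Cons.prems by simp_all
  then show ?case using Cons by simp
qed simp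

lemma mcong_telescope:
  assumes "\<And>v w. (v, w) \<in> set (zip vs (tl vs)) \<Longrightarrow> e @ a v @ s v w \<approx> e @ a w"
    and "vs \<noteq> []"
  shows "e @ a (hd vs) @ concat (map (case_prod s) (zip vs (tl vs))) \<approx> e @ a (last vs)"
  using assms
proof (induct vs)
  case (Cons v us)
  show ?case
  proof (cases us)
    case Nil
    then show ?thesis by (simp add: mcong.refl)
  next
    case (Cons w us')
    have "e @ a v @ concat (map (case_prod s) (zip (v # us) us))
        = (e @ a v @ s v w) @ concat (map (case_prod s) (zip us (tl us)))"
      using Cons by simp
    also have "\<dots> \<approx> (e @ a w) @ concat (map (case_prod s) (zip us (tl us)))"
      by (rule mcong_append[OF _ mcong.refl]) (use Cons.prems(1) Cons in simp)
    also have "\<dots> \<approx> e @ a (last us)"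
      using Cons.hyps Cons.prems(1) Cons by (simp add: set_zip_rightD)
    finally show ?thesis using Cons by simp
  qed
qed simp

section \<open>Labels of cells\<close>

lemma labeling_HiE:
  assumes "labeling cells dim face pdim bface f" "D \<in> cells" "2 \<le> dim D"
  obtains r where "f D = Hi r" "pdim r = dim D"
proof -
  have "bdim pdim (f D) = dim D" using assms unfolding labeling_def by auto
  then show ?thesis using that assms(3) by (cases "f D") auto
qed

lemma labeling_label_idempotent:
  assumes "labeling cells dim face pdim bface f" "D \<in> cells" "2 \<le> dim D"
  shows "idempotent (blab (f D))"
proof -
  obtain r where "f D = Hi r" using labeling_HiE[OF assms] .
  then show ?thesis by (simp add: mcong.idem)
qed

lemma label_below_face_label:
  assumes ss: "semi_simplicial cells dim face" and lab: "labeling cells dim face pdim bface f"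
    and D: "D \<in> cells" "3 \<le> dim D" and i: "1 \<le> i" "i \<le> dim D"
  shows "below (blab (f D)) (blab (f (face D i)))"
proof -
  obtain r where r: "f D = Hi r" "pdim r = dim D" using labeling_HiE[OF lab D(1)] D(2) by auto
  have faces: "\<And>j. j \<le> dim D \<Longrightarrow> bface (Hi r) j = f (face D j)"
    using lab D r unfolding labeling_def by auto
  have idem: "\<And>j. j \<le> dim D \<Longrightarrow> idempotent (blab (bface (Hi r) j))"
    using faces ss D labeling_label_idempotent[OF lab] unfolding semi_simplicial_def by auto
  let ?ws = "map (\<lambda>i. blab (bface (Hi r) i)) (rev [1..<Suc (dim D)])"
  let ?e = "blab (edge bface (Hi r) (dim D) 0 1)"
  have "below [(GP r, False)] (bl pdim bface r)"
    unfolding below_def using mcong.rel[of pdim bface r] by simp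
  then have bl: "below [(GP r, False)] (concat ?ws @ ?e @ blab (bface (Hi r) 0) @ winv ?e)"
    unfolding bl_def using r D by (simp add: Let_def)
  have conj: "idempotent (?e @ blab (bface (Hi r) 0) @ winv ?e)"
    by (rule idempotent_conj) (use idem in simp)
  have "\<forall>w \<in> set ?ws. below [(GP r, False)] w"
    by (rule below_concat_idempotentD[OF _ conj bl]) (use idem in auto)
  then show ?thesis using r faces i by auto
qed

lemma label_below_triangle:
  assumes ss: "semi_simplicial cells dim face" and lab: "labeling cells dim face pdim bface f"
  shows "D \<in> cells \<Longrightarrow> 2 \<le> dim D \<Longrightarrow> 0 < v \<Longrightarrow> v < w \<Longrightarrow> w \<le> dim D \<Longrightarrow>
    below (blab (f D))
      (edge_label face f D (dim D) 0 v @ edge_label face f D (dim D) v w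
       @ edge_label face f D (dim D) w 0)"
proof (induct "dim D" arbitrary: D v w rule: less_induct)
  case less
  show ?case
  proof (cases "dim D = 2")
    case True
    obtain r where r: "f D = Hi r" "pdim r = 2"
      using labeling_HiE[OF lab less.prems(1,2)] True by auto
    have faces: "\<And>j. j \<le> 2 \<Longrightarrow> bface (Hi r) j = f (face D j)"
      using lab less.prems r True unfolding labeling_def by auto
    have "{0..2::nat} - {0, 1} = {2}" "{0..2::nat} - {1, 2} = {0}" "{0..2::nat} - {0, 2} = {1}"
      by auto
    then have "bl pdim bface r = edge_label face f D 2 0 1 @ edge_label face f D 2 1 2
        @ edge_label face f D 2 2 0"
      using r faces by (simp add: bl_def edge_label_def edge_def restr_def)
    moreover have "v = 1" "w = 2" using less.prems True by auto
    ultimately show ?thesis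
      using mcong.rel[of pdim bface r] r True by (simp add: below_def)
  next
    case False
    define i where "i = (if v \<noteq> 1 then 1 else if w \<noteq> 2 then 2 else (3::nat))"
    have i: "1 \<le> i" "i \<le> dim D" "i \<noteq> v" "i \<noteq> w"
      using less.prems False by (auto simp: i_def)
    have Di: "face D i \<in> cells" "dim (face D i) = dim D - 1"
      using ss less.prems i unfolding semi_simplicial_def by auto
    have shift: "edge_label face f D (dim D) a b
        = edge_label face f (face D i) (dim D - 1) (face_vertex i a) (face_vertex i b)"
      if "a \<noteq> b" "a \<le> dim D" "b \<le> dim D" "i \<noteq> a" "i \<noteq> b" for a b
      using edge_label_face[OF ss less.prems(1) HOL.refl] that i by simp
    have fv: "face_vertex i 0 = 0" "0 < face_vertex i v" "face_vertex i v < face_vertex i w"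
      "face_vertex i w \<le> dim (face D i)"
      using less.prems i Di(2) by (auto simp: face_vertex_def)
    have "below (blab (f (face D i)))
      (edge_label face f (face D i) (dim D - 1) 0 (face_vertex i v)
       @ edge_label face f (face D i) (dim D - 1) (face_vertex i v) (face_vertex i w)
       @ edge_label face f (face D i) (dim D - 1) (face_vertex i w) 0)"
      using less.hyps[OF _ Di(1) _ fv(2-4)] Di(2) less.prems(2) False by simp
    also have "\<dots> = edge_label face f D (dim D) 0 v @ edge_label face f D (dim D) v w
       @ edge_label face f D (dim D) w 0"
      using shift[of 0 v] shift[of v w] shift[of w 0] fv(1) less.prems i by simp
    finally show ?thesis
      using below_trans label_below_face_label[OF ss lab less.prems(1) _ i(1,2)] less.prems False
      by simp
  qed
qed

lemma label_below_spoke_cycle: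
  assumes ss: "semi_simplicial cells dim face" and lab: "labeling cells dim face pdim bface f"
    and C: "C \<in> cells" "2 \<le> dim C" and vw: "v \<noteq> w" "v \<le> dim C" "w \<le> dim C"
  shows "below (blab (f C))
    (spoke_label face f C (dim C) v @ edge_label face f C (dim C) v w
     @ winv (spoke_label face f C (dim C) w))"
proof -
  let ?e = "blab (f C)" and ?a = "spoke_label face f C (dim C)"
    and ?s = "edge_label face f C (dim C)"
  have e: "idempotent ?e" by (rule labeling_label_idempotent[OF lab C])
  have nonzero: "below ?e (?a v @ ?s v w @ winv (?a w))"
    if "0 < v" "v \<noteq> w" "0 < w" "w \<le> dim C" "v \<le> dim C" for v w
  proof (cases "v < w")
    case True
    then show ?thesis
      using label_below_triangle[OF ss lab C that(1) True that(4)] that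
      by (simp add: spoke_label_def edge_label_swap[of w 0])
  next
    case False
    then have "below ?e (?a w @ ?s w v @ winv (?a v))"
      using label_below_triangle[OF ss lab C that(3), of v] that
      by (simp add: spoke_label_def edge_label_swap[of v 0])
    from below_winv[OF e this] show ?thesis
      by (simp add: edge_label_swap[OF that(2)])
  qed
  have loop: "below ?e (?a u @ winv (?a u))" if "0 < u" "u \<le> dim C" for u
  proof -
    define u' where "u' = (if u = 1 then 2 else 1 :: nat)"
    have "0 < u'" "u' \<noteq> u" "u' \<le> dim C" using C(2) by (auto simp: u'_def)
    then have "below ?e ((?a u' @ ?s u' u) @ winv (?a u))" using nonzero[of u' u] that by simp
    then show ?thesis by (rule below_suffix_winv)
  qed
  show ?thesis
  proof (cases "v = 0 \<or> w = 0")
    case True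
    then show ?thesis
      using loop vw edge_label_swap[of w 0]
      by (auto simp: spoke_label_def edge_label_def)
  next
    case False
    then show ?thesis using nonzero vw by simp
  qed
qed

end

theorem mainTheorem6:
  fixes n :: nat
    and pdim :: "'p \<Rightarrow> nat"
    and bface :: "('x,'p) bcell \<Rightarrow> nat \<Rightarrow> ('x,'p) bcell"
    and cells :: "'c set" and dim :: "'c \<Rightarrow> nat" and face :: "'c \<Rightarrow> nat \<Rightarrow> 'c"
    and f :: "'c \<Rightarrow> ('x,'p) bcell"
    and C :: 'c and ws :: "nat list"
  assumes "\<forall>r. 2 \<le> pdim r \<and> pdim r \<le> n"
    and "semi_simplicial UNIV (bdim pdim) bface"
    and ss: "semi_simplicial cells dim face"
    and lab: "labeling cells dim face pdim bface f"
    and C: "C \<in> cells" "2 \<le> dim C"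
    and path: "closed_path (dim C) ws"
  shows "mle pdim bface (blab (f C)) (path_label face f C (dim C) ws)"
proof -
  let ?e = "blab (f C)" and ?a = "spoke_label face f C (dim C)"
  have e: "idempotent pdim bface ?e" by (rule labeling_label_idempotent[OF lab C])
  have "mcong pdim bface (?e @ ?a v @ edge_label face f C (dim C) v w) (?e @ ?a w)"
    if "(v, w) \<in> set (zip ws (tl ws))" for v w
  proof -
    have "below pdim bface ?e ((?a v @ edge_label face f C (dim C) v w) @ winv (?a w))"
      using label_below_spoke_cycle[OF ss lab C closed_path_edge[OF path that]] by simp
    from below_append_winv_mcong[OF e this] show ?thesis by simp
  qed
  from mcong_telescope[where vs = ws and s = "edge_label face f C (dim C)", OF this]
  have "mcong pdim bface (?e @ ?a (hd ws) @ path_label face f C (dim C) ws) (?e @ ?a (last ws))"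
    using path by (simp add: closed_path_def path_label_eq_concat_edge_label)
  then have "mcong pdim bface ?e (?e @ path_label face f C (dim C) ws)"
    using path by (simp add: closed_path_def spoke_label_def mcong.sym)
  then show ?thesis using e by (auto simp: mle_def)
qed

end
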